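(* The group $Fr(162\times 4)$ is not isomorphic to any group $C(n,a,b)$ ($n$ a positive integer, $a,b$ integers).
   Context: For a positive integer $n$ and integers $a,b$, let $\eta=e^{2i\pi/n}$, $F(n,a,b)=\mathrm{diag}(\eta^a,\eta^b,\eta^{-a-b})$, $E=\begin{pmatrix}0&1&0\\0&0&1\\1&0&0\end{pmatrix}$, and $C(n,a,b)=\langle F(n,a,b),E\rangle\subset SU(3)$. Let $\omega=e^{2i\pi/3}$, $J$ the antidiagonal matrix with antidiagonal entries $1$, $G_1=\mathrm{diag}(e^{7i\pi/9},-e^{4i\pi/9},-e^{7i\pi/9})$, $G_2=\begin{pmatrix}-\tfrac12 e^{4i\pi/9}&\tfrac{1}{\sqrt2}e^{7i\pi/9}&\tfrac12 e^{4i\pi/9}\\ \tfrac{1}{\sqrt2}e^{7i\pi/9}&0&\tfrac{1}{\sqrt2}e^{7i\pi/9}\\ \tfrac12 e^{4i\pi/9}&\tfrac{1}{\sqrt2}e^{7i\pi/9}&-\tfrac12 e^{4i\pi/9}\end{pmatrix}$, $FUM=-\omega J$, $Fr(162\times 4)=\langle G_1,G_2,FUM\rangle$. *)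

theory Defs
  imports "HOL-Analysis.Analysis" "HOL-Algebra.Generated_Groups"
begin

definition GL3 :: "(complex^3^3) monoid" where
  "GL3 = \<lparr>carrier = {A. invertible A}, mult = (**), one = mat 1\<rparr>"

definition mat_group :: "(complex^3^3) set \<Rightarrow> (complex^3^3) monoid" where
  "mat_group S = GL3\<lparr>carrier := generate GL3 S\<rparr>"

definition mat3 :: "complex \<Rightarrow> complex \<Rightarrow> complex \<Rightarrow> complex \<Rightarrow> complex \<Rightarrow> complex
    \<Rightarrow> complex \<Rightarrow> complex \<Rightarrow> complex \<Rightarrow> complex^3^3" where
  "mat3 a11 a12 a13 a21 a22 a23 a31 a32 a33 =
     vector [vector [a11, a12, a13], vector [a21, a22, a23], vector [a31, a32, a33]]"

definition diag3 :: "complex \<Rightarrow> complex \<Rightarrow> complex \<Rightarrow> complex^3^3" where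
  "diag3 x y z = mat3 x 0 0 0 y 0 0 0 z"

definition eta :: "nat \<Rightarrow> complex" where
  "eta n = exp (2 * pi * \<i> / of_nat n)"

definition Fmat :: "nat \<Rightarrow> int \<Rightarrow> int \<Rightarrow> complex^3^3" where
  "Fmat n a b = diag3 (eta n powi a) (eta n powi b) (eta n powi (- a - b))"

definition Emat :: "complex^3^3" where
  "Emat = mat3 0 1 0 0 0 1 1 0 0"

definition Cgrp :: "nat \<Rightarrow> int \<Rightarrow> int \<Rightarrow> (complex^3^3) monoid" where
  "Cgrp n a b = mat_group {Fmat n a b, Emat}"

definition omega :: complex where "omega = exp (2 * pi * \<i> / 3)"

definition Jmat :: "complex^3^3" where "Jmat = mat3 0 0 1 0 1 0 1 0 0"

definition G1 :: "complex^3^3" where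
  "G1 = diag3 (exp (7 * pi * \<i> / 9)) (- exp (4 * pi * \<i> / 9)) (- exp (7 * pi * \<i> / 9))"

definition G2 :: "complex^3^3" where
  "G2 = (let p = exp (4 * pi * \<i> / 9); q = exp (7 * pi * \<i> / 9); s = 1 / complex_of_real (sqrt 2) in
     mat3 (- p / 2) (s * q) (p / 2)
          (s * q)   0      (s * q)
          (p / 2)   (s * q) (- p / 2))"

definition FUM :: "complex^3^3" where "FUM = mat (- omega) ** Jmat"

definition Fr162x4 :: "(complex^3^3) monoid" where
  "Fr162x4 = mat_group {G1, G2, FUM}"

end

theory Submission
  imports Defs
begin

text \<open>Every group C(n,a,b) lies in the group of monomial matrices of determinant one whose
  permutation part is a power of the 3-cycle E. In that group each non-diagonal element has cube 1,
  so any two elements with cube different from 1 are diagonal and therefore commute. An injective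
  homomorphism reflects this property, but in Fr(162x4) the generators G1 and G2 both have
  cube different from 1 and do not commute.\<close>

definition non_roots_of_unity_commute :: "('a, 'b) monoid_scheme \<Rightarrow> nat \<Rightarrow> bool" where
  "non_roots_of_unity_commute G k \<longleftrightarrow>
     (\<forall>x\<in>carrier G. \<forall>y\<in>carrier G. x [^]\<^bsub>G\<^esub> k \<noteq> \<one>\<^bsub>G\<^esub> \<longrightarrow> y [^]\<^bsub>G\<^esub> k \<noteq> \<one>\<^bsub>G\<^esub> \<longrightarrow>
        x \<otimes>\<^bsub>G\<^esub> y = y \<otimes>\<^bsub>G\<^esub> x)"

lemma hom_one_into_group:
  assumes "f \<in> hom G H" "monoid G" "group H"
  shows "f \<one>\<^bsub>G\<^esub> = \<one>\<^bsub>H\<^esub>"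
proof -
  have one: "\<one>\<^bsub>G\<^esub> \<in> carrier G" by (rule monoid.one_closed[OF assms(2)])
  have "f \<one>\<^bsub>G\<^esub> \<otimes>\<^bsub>H\<^esub> f \<one>\<^bsub>G\<^esub> = f (\<one>\<^bsub>G\<^esub> \<otimes>\<^bsub>G\<^esub> \<one>\<^bsub>G\<^esub>)"
    using hom_mult[OF assms(1) one one] by simp
  also have "\<dots> = f \<one>\<^bsub>G\<^esub>" using monoid.l_one[OF assms(2) one] by simp
  finally show ?thesis
    using group.l_cancel_one[OF assms(3)] hom_in_carrier[OF assms(1) one] by simp
qed

lemma hom_nat_pow_into_group:
  assumes "f \<in> hom G H" "monoid G" "group H" "x \<in> carrier G"
  shows "f (x [^]\<^bsub>G\<^esub> (k::nat)) = f x [^]\<^bsub>H\<^esub> k"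
proof (induction k)
  case 0
  then show ?case using hom_one_into_group[OF assms(1-3)] by simp
next
  case (Suc k)
  then show ?case
    using hom_mult[OF assms(1) monoid.nat_pow_closed[OF assms(2,4)] assms(4)] by simp
qed

lemma inj_hom_reflects_non_roots_of_unity_commute:
  assumes f: "f \<in> hom G H" "inj_on f (carrier G)" and G: "monoid G" and H: "group H"
    and "non_roots_of_unity_commute H k"
  shows "non_roots_of_unity_commute G k"
  unfolding non_roots_of_unity_commute_def
proof (intro ballI impI)
  fix x y assume x: "x \<in> carrier G" and y: "y \<in> carrier G"
    and xk: "x [^]\<^bsub>G\<^esub> k \<noteq> \<one>\<^bsub>G\<^esub>" and yk: "y [^]\<^bsub>G\<^esub> k \<noteq> \<one>\<^bsub>G\<^esub>"
  have f_root: "f z [^]\<^bsub>H\<^esub> k \<noteq> \<one>\<^bsub>H\<^esub>" if z: "z \<in> carrier G" "z [^]\<^bsub>G\<^esub> k \<noteq> \<one>\<^bsub>G\<^esub>" for z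
  proof -
    have "f (z [^]\<^bsub>G\<^esub> k) \<noteq> f \<one>\<^bsub>G\<^esub>"
      using z inj_onD[OF f(2)] monoid.nat_pow_closed[OF G] monoid.one_closed[OF G] by blast
    then show ?thesis using hom_nat_pow_into_group[OF f(1) G H z(1)] hom_one_into_group[OF f(1) G H]
      by simp
  qed
  have "f x \<otimes>\<^bsub>H\<^esub> f y = f y \<otimes>\<^bsub>H\<^esub> f x"
    using assms(5) hom_in_carrier[OF f(1)] x y f_root[OF x xk] f_root[OF y yk]
    unfolding non_roots_of_unity_commute_def by blast
  then have "f (x \<otimes>\<^bsub>G\<^esub> y) = f (y \<otimes>\<^bsub>G\<^esub> x)" using hom_mult[OF f(1)] x y by simp
  then show "x \<otimes>\<^bsub>G\<^esub> y = y \<otimes>\<^bsub>G\<^esub> x"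
    using inj_onD[OF f(2)] x y monoid.m_closed[OF G] by blast
qed

lemma group_GL3: "group GL3"
proof (rule groupI)
  show "\<one>\<^bsub>GL3\<^esub> \<in> carrier GL3"
    unfolding GL3_def invertible_def by (auto intro: exI[of _ "mat 1"])
  fix A assume "A \<in> carrier GL3"
  then obtain B where "A ** B = mat 1" "B ** A = mat 1"
    by (auto simp: GL3_def invertible_def)
  then show "\<exists>B\<in>carrier GL3. B \<otimes>\<^bsub>GL3\<^esub> A = \<one>\<^bsub>GL3\<^esub>"
    by (auto simp: GL3_def invertible_def)
qed (simp_all add: GL3_def invertible_mult matrix_mul_assoc)

lemma mat_group_carrier [simp]: "carrier (mat_group S) = generate GL3 S"
  and mat_group_mult [simp]: "mult (mat_group S) = (**)"
  and mat_group_one [simp]: "one (mat_group S) = mat 1"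
  by (simp_all add: mat_group_def GL3_def)

lemma monoid_mat_group: "monoid (mat_group S)"
  using generate.one[of GL3 S] generate.eng[of _ GL3 S]
  by (intro monoidI) (auto simp: GL3_def matrix_mul_assoc)

lemma mat_group_cube: "x [^]\<^bsub>mat_group S\<^esub> (3::nat) = x ** x ** x"
  by (simp add: numeral_3_eq_3)

lemma mat3_mult:
  "mat3 a11 a12 a13 a21 a22 a23 a31 a32 a33 ** mat3 b11 b12 b13 b21 b22 b23 b31 b32 b33 =
   mat3 (a11*b11 + a12*b21 + a13*b31) (a11*b12 + a12*b22 + a13*b32) (a11*b13 + a12*b23 + a13*b33)
        (a21*b11 + a22*b21 + a23*b31) (a21*b12 + a22*b22 + a23*b32) (a21*b13 + a22*b23 + a23*b33)
        (a31*b11 + a32*b21 + a33*b31) (a31*b12 + a32*b22 + a33*b32) (a31*b13 + a32*b23 + a33*b33)"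
  unfolding mat3_def matrix_matrix_mult_def by (simp add: vec_eq_iff forall_3 sum_3)

lemma mat3_eq_iff:
  "mat3 a11 a12 a13 a21 a22 a23 a31 a32 a33 = mat3 b11 b12 b13 b21 b22 b23 b31 b32 b33 \<longleftrightarrow>
   a11 = b11 \<and> a12 = b12 \<and> a13 = b13 \<and> a21 = b21 \<and> a22 = b22 \<and> a23 = b23 \<and>
   a31 = b31 \<and> a32 = b32 \<and> a33 = b33"
  unfolding mat3_def by (auto simp: vec_eq_iff forall_3)

lemma mat_one_eq_mat3: "mat 1 = mat3 1 0 0 0 1 0 0 0 1"
  unfolding mat3_def mat_def by (simp add: vec_eq_iff forall_3)

definition cyclic_monomials :: "(complex^3^3) set" where
  "cyclic_monomials =
     {mat3 x 0 0 0 y 0 0 0 z | x y z. x * y * z = 1} \<union>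
     {mat3 0 x 0 0 0 y z 0 0 | x y z. x * y * z = 1} \<union>
     {mat3 0 0 x y 0 0 0 z 0 | x y z. x * y * z = 1}"

lemma cyclic_monomialsE:
  assumes "M \<in> cyclic_monomials"
  obtains x y z where "x * y * z = 1"
    "M = mat3 x 0 0 0 y 0 0 0 z \<or> M = mat3 0 x 0 0 0 y z 0 0 \<or> M = mat3 0 0 x y 0 0 0 z 0"
  using assms unfolding cyclic_monomials_def by blast

lemma cyclic_monomials_mult:
  assumes "M \<in> cyclic_monomials" "N \<in> cyclic_monomials"
  shows "M ** N \<in> cyclic_monomials"
proof -
  obtain x y z where m: "x * y * z = 1"
    "M = mat3 x 0 0 0 y 0 0 0 z \<or> M = mat3 0 x 0 0 0 y z 0 0 \<or> M = mat3 0 0 x y 0 0 0 z 0"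
    using assms(1) by (rule cyclic_monomialsE)
  obtain u v w where n: "u * v * w = 1"
    "N = mat3 u 0 0 0 v 0 0 0 w \<or> N = mat3 0 u 0 0 0 v w 0 0 \<or> N = mat3 0 0 u v 0 0 0 w 0"
    using assms(2) by (rule cyclic_monomialsE)
  have "(x * u) * (y * v) * (z * w) = 1" "(x * v) * (y * w) * (z * u) = 1"
    "(x * w) * (y * u) * (z * v) = 1"
    using m(1) n(1) by (metis mult.assoc mult.left_commute mult_1_right)+
  then show ?thesis using m(2) n(2) unfolding cyclic_monomials_def
    by (elim disjE; simp only: mat3_mult mult_zero_left mult_zero_right add_0 add_0_right mat3_eq_iff;
        blast)
qed

lemma cyclic_monomials_left_inverse:
  assumes "M \<in> cyclic_monomials"
  shows "\<exists>N\<in>cyclic_monomials. N ** M = mat 1"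
proof -
  obtain x y z where m: "x * y * z = 1"
    "M = mat3 x 0 0 0 y 0 0 0 z \<or> M = mat3 0 x 0 0 0 y z 0 0 \<or> M = mat3 0 0 x y 0 0 0 z 0"
    using assms by (rule cyclic_monomialsE)
  have one: "x * y * z = 1" "y * z * x = 1" "x * z * y = 1"
    using m(1) by (simp_all only: ac_simps)
  \<comment> \<open>As \<open>x y z = 1\<close>, the inverse of each entry is the product of the other two.\<close>
  have sq: "(y * z) * (x * z) * (x * y) = 1" "(x * y) * (y * z) * (x * z) = 1"
    "(x * z) * (x * y) * (y * z) = 1"
    using arg_cong[OF m(1), of "\<lambda>t. t * t"] by (simp_all only: ac_simps mult_1_right)
  note simps = mat3_mult mat_one_eq_mat3 mat3_eq_iff mult_zero_left mult_zero_right add_0 add_0_right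
  show ?thesis using m(2)
  proof (elim disjE)
    assume "M = mat3 x 0 0 0 y 0 0 0 z"
    then show ?thesis unfolding cyclic_monomials_def using sq(1)
      by (intro bexI[of _ "mat3 (y * z) 0 0 0 (x * z) 0 0 0 (x * y)"]) (simp_all only: simps one, blast)
  next
    assume "M = mat3 0 x 0 0 0 y z 0 0"
    then show ?thesis unfolding cyclic_monomials_def using sq(2)
      by (intro bexI[of _ "mat3 0 0 (x * y) (y * z) 0 0 0 (x * z) 0"]) (simp_all only: simps one, blast)
  next
    assume "M = mat3 0 0 x y 0 0 0 z 0"
    then show ?thesis unfolding cyclic_monomials_def using sq(3)
      by (intro bexI[of _ "mat3 0 (x * z) 0 0 0 (x * y) (y * z) 0 0"]) (simp_all only: simps one, blast)
  qed
qed

lemma subgroup_cyclic_monomials: "subgroup cyclic_monomials GL3"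
proof (rule group.subgroupI[OF group_GL3])
  show "cyclic_monomials \<subseteq> carrier GL3"
    using cyclic_monomials_left_inverse by (auto simp: GL3_def invertible_left_inverse)
  have "mat 1 \<in> cyclic_monomials"
    unfolding cyclic_monomials_def mat_one_eq_mat3 by (auto simp: mat3_eq_iff)
  then show "cyclic_monomials \<noteq> {}" by blast
  fix M assume M: "M \<in> cyclic_monomials"
  then obtain N where N: "N \<in> cyclic_monomials" "N ** M = mat 1"
    using cyclic_monomials_left_inverse by blast
  have "invertible M" "invertible N"
    using M N cyclic_monomials_left_inverse invertible_left_inverse by blast+
  then have "inv\<^bsub>GL3\<^esub> M = N"
    using N(2) by (intro group.inv_equality[OF group_GL3]) (simp_all add: GL3_def)
  with N(1) show "inv\<^bsub>GL3\<^esub> M \<in> cyclic_monomials" by simp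
  fix M' assume "M' \<in> cyclic_monomials"
  with M show "M \<otimes>\<^bsub>GL3\<^esub> M' \<in> cyclic_monomials"
    by (simp add: GL3_def cyclic_monomials_mult)
qed

lemma generators_Cgrp_cyclic_monomials: "{Fmat n a b, Emat} \<subseteq> cyclic_monomials"
proof -
  have "eta n \<noteq> 0" by (simp add: eta_def)
  then have "eta n powi a * eta n powi b * eta n powi (- a - b) = 1"
    by (simp flip: power_int_add)
  then show ?thesis
    unfolding cyclic_monomials_def Fmat_def diag3_def Emat_def by (auto simp: mat3_eq_iff)
qed

lemma carrier_Cgrp_subset: "carrier (Cgrp n a b) \<subseteq> cyclic_monomials"
  unfolding Cgrp_def mat_group_def
  using group.generate_subgroup_incl[OF group_GL3 generators_Cgrp_cyclic_monomials
      subgroup_cyclic_monomials] by simp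

lemma group_Cgrp: "group (Cgrp n a b)"
proof -
  have "{Fmat n a b, Emat} \<subseteq> carrier GL3"
    using generators_Cgrp_cyclic_monomials subgroup.subset[OF subgroup_cyclic_monomials] by blast
  then show ?thesis
    unfolding Cgrp_def mat_group_def
    by (intro group.subgroup_imp_group[OF group_GL3] group.generate_is_subgroup[OF group_GL3])
qed

lemma cyclic_monomial_diagonal_if_cube_ne_one:
  assumes "M \<in> cyclic_monomials" "M ** M ** M \<noteq> mat 1"
  obtains x y z where "M = diag3 x y z"
proof -
  obtain x y z where m: "x * y * z = 1"
    "M = mat3 x 0 0 0 y 0 0 0 z \<or> M = mat3 0 x 0 0 0 y z 0 0 \<or> M = mat3 0 0 x y 0 0 0 z 0"
    using assms(1) by (rule cyclic_monomialsE)
  \<comment> \<open>The other two shapes cube to the scalar matrix \<open>x y z = 1\<close>.\<close>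
  have "mat3 0 x 0 0 0 y z 0 0 ** mat3 0 x 0 0 0 y z 0 0 ** mat3 0 x 0 0 0 y z 0 0 = mat 1"
    "mat3 0 0 x y 0 0 0 z 0 ** mat3 0 0 x y 0 0 0 z 0 ** mat3 0 0 x y 0 0 0 z 0 = mat 1"
    using m(1) by (simp_all add: mat3_mult mat_one_eq_mat3 mat3_eq_iff ac_simps)
  then show ?thesis using m(2) assms(2) that by (auto simp: diag3_def)
qed

lemma diag3_commute: "diag3 a b c ** diag3 x y z = diag3 x y z ** diag3 a b c"
  by (simp add: diag3_def mat3_mult mat3_eq_iff mult.commute)

lemma non_roots_of_unity_commute_Cgrp: "non_roots_of_unity_commute (Cgrp n a b) 3"
  unfolding non_roots_of_unity_commute_def
proof (intro ballI impI)
  fix M N assume "M \<in> carrier (Cgrp n a b)" "N \<in> carrier (Cgrp n a b)"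
    "M [^]\<^bsub>Cgrp n a b\<^esub> (3::nat) \<noteq> \<one>\<^bsub>Cgrp n a b\<^esub>" "N [^]\<^bsub>Cgrp n a b\<^esub> (3::nat) \<noteq> \<one>\<^bsub>Cgrp n a b\<^esub>"
  then obtain x y z u v w where "M = diag3 x y z" "N = diag3 u v w"
    using carrier_Cgrp_subset cyclic_monomial_diagonal_if_cube_ne_one
    by (metis Cgrp_def mat_group_cube mat_group_one subsetD)
  then show "M \<otimes>\<^bsub>Cgrp n a b\<^esub> N = N \<otimes>\<^bsub>Cgrp n a b\<^esub> M"
    by (simp add: Cgrp_def diag3_commute)
qed

lemma G1_cube_ne_one: "G1 ** G1 ** G1 \<noteq> mat 1"
  by (simp add: G1_def diag3_def mat3_mult mat_one_eq_mat3 mat3_eq_iff)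

lemma G2_cube_ne_one: "G2 ** G2 ** G2 \<noteq> mat 1"
  by (simp add: G2_def Let_def mat3_mult mat_one_eq_mat3 mat3_eq_iff algebra_simps)

lemma G1_G2_not_commute: "G1 ** G2 \<noteq> G2 ** G1"
  by (simp add: G1_def G2_def Let_def diag3_def mat3_mult mat3_eq_iff)

lemma not_non_roots_of_unity_commute_Fr162x4: "\<not> non_roots_of_unity_commute Fr162x4 3"
proof
  assume "non_roots_of_unity_commute Fr162x4 3"
  moreover have "G1 \<in> carrier Fr162x4" "G2 \<in> carrier Fr162x4"
    by (auto simp: Fr162x4_def intro: generate.incl)
  ultimately have "G1 ** G2 = G2 ** G1"
    using G1_cube_ne_one G2_cube_ne_one
    unfolding non_roots_of_unity_commute_def by (simp add: Fr162x4_def mat_group_cube)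
  with G1_G2_not_commute show False ..
qed

theorem theorem11:
  shows "\<not> (\<exists>(n::nat) (a::int) (b::int). n > 0 \<and> Fr162x4 \<cong> Cgrp n a b)"
proof
  assume "\<exists>(n::nat) (a::int) (b::int). n > 0 \<and> Fr162x4 \<cong> Cgrp n a b"
  then obtain n a b f where f: "f \<in> iso Fr162x4 (Cgrp n a b)"
    unfolding is_iso_def by blast
  have "non_roots_of_unity_commute Fr162x4 3"
  proof (rule inj_hom_reflects_non_roots_of_unity_commute)
    show "f \<in> hom Fr162x4 (Cgrp n a b)" "inj_on f (carrier Fr162x4)"
      using f by (simp_all add: iso_def bij_betw_def)
    show "monoid Fr162x4" unfolding Fr162x4_def by (rule monoid_mat_group)
  qed (rule group_Cgrp, rule non_roots_of_unity_commute_Cgrp)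
  with not_non_roots_of_unity_commute_Fr162x4 show False ..
qed

end
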